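(* Let $\mathcal{A}$ be a collection of hyperplanes in $Q = S_1\times\cdots\times S_n$, no two of which are parallel, let $0\le a\le n$, let $\mathbb{P}_a$ be a probability measure on $Q_a$, let $\delta_{a+1},\dots,\delta_n \in [0,1/2]$, and let $\mathbb{P}_k$, $\alpha_k$, $c_k$ be defined as in the context. Then for each $a < k \le n$, $$M_k^{(1)} \le \frac{c_{k-1}(1)}{|S_k|} \qquad\text{and}\qquad M_k^{(2)} \le \frac{c_{k-1}(3)}{|S_k|^2}.$$ Moreover, if in addition $|S_j| \ge 3$ for each $j\in[n]$, and no hyperplane $A_F$ with $F \in \mathcal{N}_k$ has $|F| = 1$, then $$M_k^{(2)} \le \frac{1}{|S_k|^2}\big(c_{k-1}(3) - 2c_{k-1}(1) + 1\big).$$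
   Context: $S_1,\dots,S_n$ are finite sets each with at least two elements; $Q = S_1\times\cdots\times S_n$ and $Q_k = S_1\times\cdots\times S_k$. A hyperplane is $A = A_1\times\cdots\times A_n\subseteq Q$ with each $A_k$ either $S_k$ or a singleton in $S_k$; $F(A)=\{k: A_k\text{ is a singleton}\}$ is its set of fixed coordinates; hyperplanes are parallel if they have the same $F$. Hyperplanes in $\mathcal{A}$ have non-empty $F(A)$; since no two are parallel, write $\mathcal{A}=\{A_F : F\in\mathcal{F}\}$ with $\mathcal{F}=\{F(A):A\in\mathcal{A}\}$. A set $X\subseteq Q_k$ is identified with $X\times S_{k+1}\times\cdots\times S_n\subseteq Q$ (such sets are called $Q_k$-measurable); a hyperplane with $F(A)\subseteq[k]$ is viewed as a subset of $Q_k$. Let $\mathcal{F}_k=\{F\in\mathcal{F}: F\subseteq[k]\}$, $\mathcal{N}_k = \mathcal{F}_k\setminus\mathcal{F}_{k-1}$ and $B_k = \bigcup_{F\in\mathcal{N}_k} A_F\subseteq Q_k$. Measures: given $\mathbb{P}_{k-1}$ on $Q_{k-1}$ ($k>a$), for $x\in Q_{k-1}$ let $\alpha_k(x) = |\{y\in S_k : (x,y)\in B_k\}|/|S_k|$, and for $x\in Q_{k-1}, y\in S_k$ set $\mathbb{P}_k(x,y) = \max\{0, \frac{\alpha_k(x)-\delta_k}{\alpha_k(x)(1-\delta_k)}\}\cdot \frac{\mathbb{P}_{k-1}(x)}{|S_k|}$ if $(x,y)\in B_k$, and $\mathbb{P}_k(x,y)=\min\{\frac{1}{1-\alpha_k(x)},\frac{1}{1-\delta_k}\}\cdot\frac{\mathbb{P}_{k-1}(x)}{|S_k|}$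 otherwise. Let $\mathbb{E}_{k-1}$ denote expectation over $x\sim\mathbb{P}_{k-1}$, and $M_k^{(1)}=\mathbb{E}_{k-1}[\alpha_k(x)]$, $M_k^{(2)}=\mathbb{E}_{k-1}[\alpha_k(x)^2]$. For $I\subseteq[a]$, $c(I)=\max\{\mathbb{P}_a(H): H \text{ a hyperplane in } Q_a \text{ with } F(H)=I\}$ (so $c(\emptyset)=1$); for $J\subseteq[a+1,n]$, $\nu(J)=\prod_{j\in J}\frac{1}{(1-\delta_j)|S_j|}$; and for $k\ge a$, $c_k(x) = \sum_{I\subseteq[a]}c(I)x^{|I|}\prod_{j=a+1}^k\big(1+\frac{x}{(1-\delta_j)|S_j|}\big)$. *)

theory Defs
  imports Complex_Main "HOL-Library.FuncSet"
begin

text \<open>Points of Q_k = S_1 x ... x S_k are functions nat => 'a that lie in S i for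
 i in {1..k} and are undefined elsewhere (PiE). A set X of Q_k is identified with
 X x S_{k+1} x ... x S_n. A family of pairwise non-parallel hyperplanes is given by the
 family Fs of fixed-coordinate sets together with A :: nat set => nat => 'a, where
 A F i is the fixed value of A_F at coordinate i in F.\<close>

definition Qk :: "(nat \<Rightarrow> 'a set) \<Rightarrow> nat \<Rightarrow> (nat \<Rightarrow> 'a) set" where
  "Qk S k = PiE {1..k} S"

definition inHyp :: "(nat set \<Rightarrow> nat \<Rightarrow> 'a) \<Rightarrow> nat set \<Rightarrow> (nat \<Rightarrow> 'a) \<Rightarrow> bool" where
  "inHyp A F x = (\<forall>i\<in>F. x i = A F i)"

definition Fk :: "nat set set \<Rightarrow> nat \<Rightarrow> nat set set" where
  "Fk Fs k = {F \<in> Fs. F \<subseteq> {1..k}}"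

definition Nk :: "nat set set \<Rightarrow> nat \<Rightarrow> nat set set" where
  "Nk Fs k = Fk Fs k - Fk Fs (k - 1)"

definition Bk :: "(nat \<Rightarrow> 'a set) \<Rightarrow> (nat set \<Rightarrow> nat \<Rightarrow> 'a) \<Rightarrow> nat set set \<Rightarrow> nat
    \<Rightarrow> (nat \<Rightarrow> 'a) set" where
  "Bk S A Fs k = {x \<in> Qk S k. \<exists>F\<in>Nk Fs k. inHyp A F x}"

definition alpha :: "(nat \<Rightarrow> 'a set) \<Rightarrow> (nat set \<Rightarrow> nat \<Rightarrow> 'a) \<Rightarrow> nat set set \<Rightarrow> nat
    \<Rightarrow> (nat \<Rightarrow> 'a) \<Rightarrow> real" where
  "alpha S A Fs k x =
     real (card {y \<in> S k. x(k := y) \<in> Bk S A Fs k}) / real (card (S k))"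

text \<open>Pmeas ... m is the measure P_{a+m} on Q_{a+m}; Pmeas ... 0 = P_a = P.
 For x in Q_k, the point x(k := undefined) is its projection to Q_{k-1}.\<close>
primrec Pmeas :: "(nat \<Rightarrow> 'a set) \<Rightarrow> (nat set \<Rightarrow> nat \<Rightarrow> 'a) \<Rightarrow> nat set set \<Rightarrow> nat
    \<Rightarrow> ((nat \<Rightarrow> 'a) \<Rightarrow> real) \<Rightarrow> (nat \<Rightarrow> real) \<Rightarrow> nat \<Rightarrow> (nat \<Rightarrow> 'a) \<Rightarrow> real" where
  "Pmeas S A Fs a P \<delta> 0 x = P x"
| "Pmeas S A Fs a P \<delta> (Suc m) x =
     (let k = a + Suc m;
          x' = x(k := undefined);
          al = alpha S A Fs k x';
          base = Pmeas S A Fs a P \<delta> m x' / real (card (S k))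
      in if x \<in> Bk S A Fs k
         then max 0 ((al - \<delta> k) / (al * (1 - \<delta> k))) * base
         else min (1 / (1 - al)) (1 / (1 - \<delta> k)) * base)"

definition Pk :: "(nat \<Rightarrow> 'a set) \<Rightarrow> (nat set \<Rightarrow> nat \<Rightarrow> 'a) \<Rightarrow> nat set set \<Rightarrow> nat
    \<Rightarrow> ((nat \<Rightarrow> 'a) \<Rightarrow> real) \<Rightarrow> (nat \<Rightarrow> real) \<Rightarrow> nat \<Rightarrow> (nat \<Rightarrow> 'a) \<Rightarrow> real" where
  "Pk S A Fs a P \<delta> k x = Pmeas S A Fs a P \<delta> (k - a) x"

definition M1 :: "(nat \<Rightarrow> 'a set) \<Rightarrow> (nat set \<Rightarrow> nat \<Rightarrow> 'a) \<Rightarrow> nat set set \<Rightarrow> nat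
    \<Rightarrow> ((nat \<Rightarrow> 'a) \<Rightarrow> real) \<Rightarrow> (nat \<Rightarrow> real) \<Rightarrow> nat \<Rightarrow> real" where
  "M1 S A Fs a P \<delta> k =
     (\<Sum>x\<in>Qk S (k - 1). Pk S A Fs a P \<delta> (k - 1) x * alpha S A Fs k x)"

definition M2 :: "(nat \<Rightarrow> 'a set) \<Rightarrow> (nat set \<Rightarrow> nat \<Rightarrow> 'a) \<Rightarrow> nat set set \<Rightarrow> nat
    \<Rightarrow> ((nat \<Rightarrow> 'a) \<Rightarrow> real) \<Rightarrow> (nat \<Rightarrow> real) \<Rightarrow> nat \<Rightarrow> real" where
  "M2 S A Fs a P \<delta> k =
     (\<Sum>x\<in>Qk S (k - 1). Pk S A Fs a P \<delta> (k - 1) x * (alpha S A Fs k x)^2)"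

definition cI :: "(nat \<Rightarrow> 'a set) \<Rightarrow> nat \<Rightarrow> ((nat \<Rightarrow> 'a) \<Rightarrow> real) \<Rightarrow> nat set \<Rightarrow> real" where
  "cI S a P I = Max ((\<lambda>v. \<Sum>x\<in>{x \<in> Qk S a. \<forall>i\<in>I. x i = v i}. P x) ` PiE I S)"

definition ck :: "(nat \<Rightarrow> 'a set) \<Rightarrow> nat \<Rightarrow> ((nat \<Rightarrow> 'a) \<Rightarrow> real) \<Rightarrow> (nat \<Rightarrow> real)
    \<Rightarrow> nat \<Rightarrow> real \<Rightarrow> real" where
  "ck S a P \<delta> k t = (\<Sum>I\<in>Pow {1..a}. cI S a P I * t ^ card I *
      (\<Prod>j\<in>{a+1..k}. (1 + t / ((1 - \<delta> j) * real (card (S j))))))"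

end

theory Submission
  imports Defs
begin

text \<open>
  Write P_k(x, y) = r(x, y) P_{k-1}(x) / |S_k|. The reweighting factor r never exceeds
  1 / (1 - \<delta>_k) and averages to at most 1 over each fibre {x} \<times> S_k. Induction on k
  therefore bounds the P_k-mass of every hyperplane with fixed coordinates G \<subseteq> [k] by
  c(G \<inter> [a]) \<nu>(G - [a]): fixing the new coordinate costs the factor 1 / ((1 - \<delta>_k) |S_k|),
  leaving it free costs nothing.

  A hyperplane A_F with F \<in> N_k meets the fibre over x in at most one point, and only if x
  lies in the hyperplane of Q_{k-1} fixing F - {k}. So |S_k| \<alpha>_k(x) is at most the number
  of these hyperplanes of Q_{k-1} containing x, and the first and second moments of \<alpha>_k are
  bounded by sums of the mass bound over the sets G, resp. the unions G \<union> G', of fixed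
  coordinates. Summing over all G \<subseteq> [k-1] gives c_{k-1}(1), and over all pairs c_{k-1}(3),
  because c_{k-1}(t) = \<Sum>_U t^|U| c(U \<inter> [a]) \<nu>(U - [a]) and every U is the union of exactly
  3^|U| pairs. If no F \<in> N_k is a singleton, G = {} never occurs, which saves 2 c_{k-1}(1) - 1.
\<close>

section \<open>Sums over powersets\<close>

lemma sum_Pow_insert:
  assumes "finite A" "x \<notin> A"
  shows "(\<Sum>X\<in>Pow (insert x A). f X) = (\<Sum>X\<in>Pow A. f X) + (\<Sum>X\<in>Pow A. f (insert x X))"
proof -
  have "(\<Sum>X\<in>Pow (insert x A). f X) = (\<Sum>X\<in>Pow A. f X) + (\<Sum>X\<in>insert x ` Pow A. f X)"
    unfolding Pow_insert by (rule sum.union_disjoint) (use assms in auto)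
  also have "(\<Sum>X\<in>insert x ` Pow A. f X) = (\<Sum>X\<in>Pow A. f (insert x X))"
    by (subst sum.reindex) (use assms in \<open>auto intro!: inj_onI simp: o_def\<close>)
  finally show ?thesis .
qed

lemma sum_Pow_Pow_Un:
  fixes f :: "'a set \<Rightarrow> 'b::comm_semiring_1"
  assumes "finite A"
  shows "(\<Sum>G\<in>Pow A. \<Sum>G'\<in>Pow A. f (G \<union> G')) = (\<Sum>U\<in>Pow A. 3 ^ card U * f U)"
  using assms
proof (induction A arbitrary: f rule: finite_induct)
  case (insert x A)
  let ?g = "\<lambda>U. f (insert x U)"
  have split: "(\<Sum>X\<in>Pow (insert x A). h X) = (\<Sum>X\<in>Pow A. h X) + (\<Sum>X\<in>Pow A. h (insert x X))"
    for h :: "'a set \<Rightarrow> 'b"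
    using sum_Pow_insert[OF insert.hyps] .
  have card_insert: "card (insert x U) = Suc (card U)" if "U \<in> Pow A" for U
    using that insert.hyps by (auto intro: card_insert_disjoint finite_subset)
  have "(\<Sum>G\<in>Pow (insert x A). \<Sum>G'\<in>Pow (insert x A). f (G \<union> G'))
      = (\<Sum>G\<in>Pow A. \<Sum>G'\<in>Pow A. f (G \<union> G')) + 3 * (\<Sum>G\<in>Pow A. \<Sum>G'\<in>Pow A. ?g (G \<union> G'))"
  proof -
    have three: "3 * y = y + (y + y)" for y :: 'b
      using distrib_right[of 1 2 y] by (simp add: mult_2)
    show ?thesis
      by (simp add: split sum.distrib three add.assoc)
  qed
  also have "\<dots> = (\<Sum>U\<in>Pow A. 3 ^ card U * f U) + 3 * (\<Sum>U\<in>Pow A. 3 ^ card U * ?g U)"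
    using insert.IH[of f] insert.IH[of ?g] by simp
  also have "\<dots> = (\<Sum>U\<in>Pow A. 3 ^ card U * f U) + (\<Sum>U\<in>Pow A. 3 ^ card (insert x U) * ?g U)"
    by (simp add: card_insert sum_distrib_left mult.assoc)
  also have "\<dots> = (\<Sum>U\<in>Pow (insert x A). 3 ^ card U * f U)"
    by (rule split[symmetric])
  finally show ?case .
qed simp

lemma sum_sum_Un_remove_empty:
  fixes f :: "'a set \<Rightarrow> 'b::comm_ring_1"
  assumes "finite \<G>" "{} \<in> \<G>"
  shows "(\<Sum>G\<in>\<G> - {{}}. \<Sum>G'\<in>\<G> - {{}}. f (G \<union> G'))
       = (\<Sum>G\<in>\<G>. \<Sum>G'\<in>\<G>. f (G \<union> G')) - 2 * (\<Sum>G\<in>\<G>. f G) + f {}"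
proof -
  have remove: "sum h \<G> = h {} + sum h (\<G> - {{}})" for h :: "'a set \<Rightarrow> 'b"
    using sum.remove[OF assms] .
  have "(\<Sum>G\<in>\<G>. \<Sum>G'\<in>\<G>. f (G \<union> G'))
      = (\<Sum>G\<in>\<G>. f G + (\<Sum>G'\<in>\<G> - {{}}. f (G \<union> G')))"
    by (subst remove) simp
  also have "\<dots> = (\<Sum>G\<in>\<G>. f G) + (\<Sum>G'\<in>\<G> - {{}}. f G')
      + (\<Sum>G\<in>\<G> - {{}}. \<Sum>G'\<in>\<G> - {{}}. f (G \<union> G'))"
    using remove[of "\<lambda>G. \<Sum>G'\<in>\<G> - {{}}. f (G \<union> G')"] by (simp add: sum.distrib add.assoc)
  also have "(\<Sum>G'\<in>\<G> - {{}}. f G') = (\<Sum>G\<in>\<G>. f G) - f {}"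
    using remove[of f] by simp
  finally show ?thesis
    by (simp add: algebra_simps)
qed

lemma sum_sum_mono_subset:
  fixes f :: "'a \<Rightarrow> 'a \<Rightarrow> 'b::ordered_comm_monoid_add"
  assumes "finite Y" "X \<subseteq> Y" "\<And>G G'. G \<in> Y \<Longrightarrow> G' \<in> Y \<Longrightarrow> 0 \<le> f G G'"
  shows "(\<Sum>G\<in>X. \<Sum>G'\<in>X. f G G') \<le> (\<Sum>G\<in>Y. \<Sum>G'\<in>Y. f G G')"
proof -
  have "(\<Sum>G\<in>X. \<Sum>G'\<in>X. f G G') \<le> (\<Sum>G\<in>X. \<Sum>G'\<in>Y. f G G')"
    using assms by (intro sum_mono sum_mono2) auto
  also have "\<dots> \<le> (\<Sum>G\<in>Y. \<Sum>G'\<in>Y. f G G')"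
    using assms by (intro sum_mono2 sum_nonneg) auto
  finally show ?thesis .
qed

section \<open>The measures P_k\<close>

definition reweight :: "real \<Rightarrow> real \<Rightarrow> bool \<Rightarrow> real" where
  "reweight al d inB =
     (if inB then max 0 ((al - d) / (al * (1 - d))) else min (1 / (1 - al)) (1 / (1 - d)))"

lemma reweight_nonneg: "0 \<le> al \<Longrightarrow> al \<le> 1 \<Longrightarrow> d < 1 \<Longrightarrow> 0 \<le> reweight al d b"
  by (auto simp: reweight_def)

lemma reweight_le:
  assumes "0 \<le> al" "al \<le> 1" "0 \<le> d" "d < 1"
  shows "reweight al d b \<le> 1 / (1 - d)"
proof (cases "b \<and> al \<noteq> 0")
  case True
  have "(al - d) / (al * (1 - d)) = ((al - d) / al) / (1 - d)"
    by simp
  also have "\<dots> \<le> 1 / (1 - d)"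
    using assms True by (intro divide_right_mono) (auto simp: divide_le_eq)
  finally show ?thesis
    using True assms by (simp add: reweight_def)
qed (use assms in \<open>auto simp: reweight_def\<close>)

lemma reweight_mean_le:
  assumes "0 \<le> al" "al \<le> 1" "0 \<le> d" "d < 1"
  shows "al * reweight al d True + (1 - al) * reweight al d False \<le> 1"
proof -
  have out: "(1 - al) * reweight al d False \<le> (1 - al) * min (1 / (1 - al)) (1 / (1 - d))"
    by (simp add: reweight_def)
  consider "al = 0" | "al = 1" | "0 < al" "al < 1" "al \<le> d" | "0 < al" "al < 1" "d < al"
    using assms by linarith
  then show ?thesis
  proof cases
    case 3
    then have "(al - d) / (al * (1 - d)) \<le> 0"
      using assms by (intro divide_nonpos_pos) auto
    then have "reweight al d True = 0"
      by (simp add: reweight_def)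
    moreover have "(1 - al) * min (1 / (1 - al)) (1 / (1 - d)) \<le> (1 - al) * (1 / (1 - al))"
      using 3 by (intro mult_left_mono) auto
    moreover have "(1 - al) * (1 / (1 - al)) = 1"
      using 3 by simp
    ultimately show ?thesis
      using out by simp
  next
    case 4
    then have "al * reweight al d True = (al - d) / (1 - d)"
      using assms by (simp add: reweight_def)
    moreover have "(1 - al) * min (1 / (1 - al)) (1 / (1 - d)) \<le> (1 - al) * (1 / (1 - d))"
      using 4 by (intro mult_left_mono) auto
    moreover have "(al - d) / (1 - d) + (1 - al) * (1 / (1 - d)) = 1"
      using assms by (simp add: field_simps)
    ultimately show ?thesis
      using out by linarith
  qed (use assms in \<open>auto simp: reweight_def\<close>)
qed

lemma sum_reweight_le_card:
  fixes Q :: "'a \<Rightarrow> bool"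
  assumes "finite Y" "Y \<noteq> {}" "0 \<le> d" "d < 1"
  defines "al \<equiv> real (card {y \<in> Y. Q y}) / real (card Y)"
  shows "(\<Sum>y\<in>Y. reweight al d (Q y)) \<le> real (card Y)"
proof -
  have card_pos: "0 < real (card Y)"
    using assms(1,2) by (simp add: card_gt_0_iff)
  have al: "0 \<le> al" "al \<le> 1"
    using assms(1) card_pos by (auto simp: al_def divide_le_eq_1 intro: card_mono)
  have "(\<Sum>y\<in>Y. reweight al d (Q y))
      = (\<Sum>y\<in>Y. of_bool (Q y) * reweight al d True + (1 - of_bool (Q y)) * reweight al d False)"
    by (intro sum.cong) auto
  also have "\<dots> = real (card {y \<in> Y. Q y}) * reweight al d True
      + (real (card Y) - real (card {y \<in> Y. Q y})) * reweight al d False"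
    using assms(1) by (simp add: sum.distrib sum_subtractf Collect_conj_eq flip: sum_distrib_right)
  also have "\<dots> = real (card Y) * (al * reweight al d True + (1 - al) * reweight al d False)"
    using card_pos by (simp add: al_def field_simps)
  also have "\<dots> \<le> real (card Y)"
    using reweight_mean_le[OF al assms(3,4)] card_pos by (simp add: mult_left_le)
  finally show ?thesis .
qed

lemma Qk_Suc: "Qk S (Suc j) = (\<lambda>(y, x). x(Suc j := y)) ` (S (Suc j) \<times> Qk S j)"
  by (simp add: Qk_def atLeastAtMostSuc_conv PiE_insert_eq)

lemma sum_Qk_Suc:
  "(\<Sum>x\<in>Qk S (Suc j). h x) = (\<Sum>x\<in>Qk S j. \<Sum>y\<in>S (Suc j). h (x(Suc j := y)))"
proof -
  have "inj_on (\<lambda>(y, x). x(Suc j := y)) (S (Suc j) \<times> Qk S j)"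
    unfolding Qk_def by (rule inj_combinator) simp
  then have "(\<Sum>x\<in>Qk S (Suc j). h x) = (\<Sum>(y, x)\<in>S (Suc j) \<times> Qk S j. h (x(Suc j := y)))"
    unfolding Qk_Suc by (subst sum.reindex) (auto simp: case_prod_beta intro!: sum.cong)
  also have "\<dots> = (\<Sum>x\<in>Qk S j. \<Sum>y\<in>S (Suc j). h (x(Suc j := y)))"
    by (simp add: sum.cartesian_product[symmetric] sum.swap[of _ "S (Suc j)"])
  finally show ?thesis .
qed

lemma Qk_undefined: "x \<in> Qk S j \<Longrightarrow> i \<notin> {1..j} \<Longrightarrow> x i = undefined"
  by (auto simp: Qk_def PiE_def extensional_def)

lemma Qk_mem: "x \<in> Qk S j \<Longrightarrow> i \<in> {1..j} \<Longrightarrow> x i \<in> S i"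
  by (auto simp: Qk_def PiE_def)

lemma alpha_nonneg: "0 \<le> alpha S A Fs k x"
  by (simp add: alpha_def)

lemma alpha_le_1: "alpha S A Fs k x \<le> 1"
proof (cases "finite (S k)")
  case True
  then have "card {y \<in> S k. x(k := y) \<in> Bk S A Fs k} \<le> card (S k)"
    by (intro card_mono) auto
  then show ?thesis
    by (auto simp: alpha_def divide_le_eq_1)
qed (simp add: alpha_def)

lemma Pk_base: "Pk S A Fs a P \<delta> a x = P x"
  by (simp add: Pk_def)

lemma Pk_Suc_upd:
  assumes "a \<le> j" "x \<in> Qk S j"
  shows "Pk S A Fs a P \<delta> (Suc j) (x(Suc j := y)) =
    reweight (alpha S A Fs (Suc j) x) (\<delta> (Suc j)) (x(Suc j := y) \<in> Bk S A Fs (Suc j))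
      * Pk S A Fs a P \<delta> j x / real (card (S (Suc j)))"
proof -
  have "x(Suc j := y, Suc j := undefined) = x"
    using Qk_undefined[OF assms(2)] by (intro ext) simp
  moreover have "Suc j - a = Suc (j - a)" "a + Suc (j - a) = Suc j"
    using assms(1) by auto
  ultimately show ?thesis
    by (cases "x(Suc j := y) \<in> Bk S A Fs (Suc j)") (simp_all add: Pk_def reweight_def Let_def)
qed

section \<open>Hyperplane weights and the polynomials c_k\<close>

definition hyp_weight :: "(nat \<Rightarrow> 'a set) \<Rightarrow> nat \<Rightarrow> ((nat \<Rightarrow> 'a) \<Rightarrow> real) \<Rightarrow> (nat \<Rightarrow> real)
    \<Rightarrow> nat set \<Rightarrow> real" where
  "hyp_weight S a P \<delta> G =
     cI S a P (G \<inter> {1..a}) * (\<Prod>j\<in>G - {1..a}. 1 / ((1 - \<delta> j) * real (card (S j))))"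

lemma hyp_weight_low:
  assumes "G \<subseteq> {1..a}"
  shows "hyp_weight S a P \<delta> G = cI S a P G"
proof -
  have "G \<inter> {1..a} = G" "G - {1..a} = {}"
    using assms by auto
  then show ?thesis
    unfolding hyp_weight_def by (simp only: prod.empty mult_1_right)
qed

lemma hyp_weight_insert:
  assumes "a < i" "i \<notin> G" "finite G"
  shows "hyp_weight S a P \<delta> (insert i G) = hyp_weight S a P \<delta> G / ((1 - \<delta> i) * real (card (S i)))"
proof -
  have "insert i G \<inter> {1..a} = G \<inter> {1..a}" "insert i G - {1..a} = insert i (G - {1..a})"
    using assms(1) by auto
  then show ?thesis
    using assms(2,3) by (simp add: hyp_weight_def)
qed

lemma ck_Suc:
  assumes "a \<le> j"
  shows "ck S a P \<delta> (Suc j) t = ck S a P \<delta> j t * (1 + t / ((1 - \<delta> (Suc j)) * real (card (S (Suc j)))))"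
proof -
  have "{a+1..Suc j} = insert (Suc j) {a+1..j}"
    using assms by auto
  then show ?thesis
    by (simp add: ck_def sum_distrib_left mult_ac)
qed

lemma sum_Pow_hyp_weight:
  "a \<le> j \<Longrightarrow> (\<Sum>U\<in>Pow {1..j}. t ^ card U * hyp_weight S a P \<delta> U) = ck S a P \<delta> j t"
proof (induction j rule: nat_induct_at_least)
  case base
  then show ?case
    by (auto simp: ck_def hyp_weight_low mult.commute intro!: sum.cong)
next
  case (Suc j)
  let ?D = "(1 - \<delta> (Suc j)) * real (card (S (Suc j)))"
  have "(\<Sum>U\<in>Pow {1..Suc j}. t ^ card U * hyp_weight S a P \<delta> U)
      = (\<Sum>U\<in>Pow {1..j}. t ^ card U * hyp_weight S a P \<delta> U)
      + (\<Sum>U\<in>Pow {1..j}. t ^ card (insert (Suc j) U) * hyp_weight S a P \<delta> (insert (Suc j) U))"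
    by (simp add: atLeastAtMostSuc_conv sum_Pow_insert)
  also have "(\<Sum>U\<in>Pow {1..j}. t ^ card (insert (Suc j) U) * hyp_weight S a P \<delta> (insert (Suc j) U))
      = t / ?D * (\<Sum>U\<in>Pow {1..j}. t ^ card U * hyp_weight S a P \<delta> U)"
    unfolding sum_distrib_left
  proof (intro sum.cong refl)
    fix U assume "U \<in> Pow {1..j}"
    then have "Suc j \<notin> U" "finite U"
      by (auto intro: finite_subset)
    then show "t ^ card (insert (Suc j) U) * hyp_weight S a P \<delta> (insert (Suc j) U)
        = t / ?D * (t ^ card U * hyp_weight S a P \<delta> U)"
      using Suc.hyps by (simp add: hyp_weight_insert)
  qed
  finally show ?case
    using Suc by (simp add: ck_Suc algebra_simps)
qed

lemma Nk_memD:
  assumes "F \<in> Nk Fs k"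
  shows "k \<in> F \<and> F - {k} \<subseteq> {1..k - 1}"
proof -
  have F: "F \<subseteq> {1..k}" "\<not> F \<subseteq> {1..k - 1}"
    using assms by (auto simp: Nk_def Fk_def)
  then obtain i where "i \<in> F" "k - 1 < i"
    by (meson atLeastAtMost_iff not_le_imp_less subset_iff)
  with F(1) have "i = k"
    by force
  with \<open>i \<in> F\<close> F(1) show ?thesis
    by auto
qed

lemma finite_Nk: "finite (Nk Fs k)"
  by (rule finite_subset[of _ "Pow {1..k}"]) (auto simp: Nk_def Fk_def)

definition Nk_traces :: "nat set set \<Rightarrow> nat \<Rightarrow> nat set set" where
  "Nk_traces Fs k = (\<lambda>F. F - {k}) ` Nk Fs k"

lemma inj_on_Nk_trace: "inj_on (\<lambda>F. F - {k}) (Nk Fs k)"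
  by (rule inj_onI) (metis Nk_memD insert_Diff)

lemma Nk_traces_subset: "Nk_traces Fs k \<subseteq> Pow {1..k - 1}"
  using Nk_memD by (fastforce simp: Nk_traces_def)

lemma empty_notin_Nk_traces:
  assumes "\<forall>F\<in>Nk Fs k. card F \<noteq> 1"
  shows "{} \<notin> Nk_traces Fs k"
proof
  assume "{} \<in> Nk_traces Fs k"
  then obtain F where F: "F \<in> Nk Fs k" "F - {k} = {}"
    by (auto simp: Nk_traces_def)
  then have "F = {k}"
    using Nk_memD by blast
  then show False
    using assms F(1) by auto
qed

lemma alpha_le_card_Nk:
  "alpha S A Fs k x \<le> (\<Sum>F\<in>Nk Fs k. of_bool (\<forall>i\<in>F - {k}. x i = A F i)) / real (card (S k))"
proof -
  let ?Y = "{y \<in> S k. x(k := y) \<in> Bk S A Fs k}"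
  let ?N = "{F \<in> Nk Fs k. \<forall>i\<in>F - {k}. x i = A F i}"
  have "?Y \<subseteq> (\<lambda>F. A F k) ` ?N"
  proof
    fix y assume "y \<in> ?Y"
    then obtain F where F: "F \<in> Nk Fs k" "inHyp A F (x(k := y))"
      by (auto simp: Bk_def)
    have "k \<in> F"
      using F(1) by (simp add: Nk_memD)
    then have "y = A F k"
      using F(2) unfolding inHyp_def by (metis fun_upd_same)
    have "x i = A F i" if "i \<in> F - {k}" for i
      using F(2) that unfolding inHyp_def by (metis DiffD1 DiffD2 fun_upd_other singletonI)
    with F(1) have "F \<in> ?N"
      by blast
    with \<open>y = A F k\<close> show "y \<in> (\<lambda>F. A F k) ` ?N"
      by blast
  qed
  then have "card ?Y \<le> card ((\<lambda>F. A F k) ` ?N)"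
    by (rule card_mono[rotated]) (use finite_Nk in auto)
  also have "\<dots> \<le> card ?N"
    by (rule card_image_le) (use finite_Nk in auto)
  finally have "card ?Y \<le> card ?N" .
  moreover have "(\<Sum>F\<in>Nk Fs k. of_bool (\<forall>i\<in>F - {k}. x i = A F i)) = real (card ?N)"
    using finite_Nk by (simp add: Collect_conj_eq Int_commute)
  ultimately show ?thesis
    unfolding alpha_def by (simp add: divide_right_mono)
qed

section \<open>Mass bounds\<close>

locale reweighting =
  fixes S :: "nat \<Rightarrow> 'a set" and A :: "nat set \<Rightarrow> nat \<Rightarrow> 'a" and Fs :: "nat set set"
    and n a :: nat and P :: "(nat \<Rightarrow> 'a) \<Rightarrow> real" and \<delta> :: "nat \<Rightarrow> real"
  assumes S_fin: "\<forall>i\<in>{1..n}. finite (S i) \<and> card (S i) \<ge> 2"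
    and a_le: "a \<le> n"
    and P_nonneg: "\<forall>x\<in>Qk S a. P x \<ge> 0"
    and P_sum: "(\<Sum>x\<in>Qk S a. P x) = 1"
    and delta: "\<forall>j\<in>{a+1..n}. 0 \<le> \<delta> j \<and> \<delta> j \<le> 1/2"
begin

abbreviation Pr :: "nat \<Rightarrow> (nat \<Rightarrow> 'a) \<Rightarrow> real" where
  "Pr \<equiv> Pk S A Fs a P \<delta>"

abbreviation w :: "nat set \<Rightarrow> real" where
  "w \<equiv> hyp_weight S a P \<delta>"

lemma finite_S: "i \<in> {1..n} \<Longrightarrow> finite (S i)"
  using S_fin by blast

lemma S_nonempty: "i \<in> {1..n} \<Longrightarrow> S i \<noteq> {}"
  using S_fin by fastforce

lemma delta_bounds: "j \<in> {a+1..n} \<Longrightarrow> 0 \<le> \<delta> j \<and> \<delta> j < 1"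
  using delta by fastforce

lemma delta_card_pos: "j \<in> {a+1..n} \<Longrightarrow> 0 < (1 - \<delta> j) * real (card (S j))"
  using delta_bounds finite_S S_nonempty by (auto simp: card_gt_0_iff)

lemma Qk_finite: "j \<le> n \<Longrightarrow> finite (Qk S j)"
  unfolding Qk_def by (intro finite_PiE finite_S) auto

lemma Pk_nonneg: "a \<le> j \<Longrightarrow> j \<le> n \<Longrightarrow> x \<in> Qk S j \<Longrightarrow> 0 \<le> Pr j x"
proof (induction j arbitrary: x rule: nat_induct_at_least)
  case base
  then show ?case
    using P_nonneg by (simp add: Pk_base)
next
  case (Suc j)
  then obtain y x' where x: "x = x'(Suc j := y)" "x' \<in> Qk S j"
    by (auto simp: Qk_Suc)
  have "0 \<le> reweight (alpha S A Fs (Suc j) x') (\<delta> (Suc j)) b" for b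
    using Suc delta_bounds[of "Suc j"] by (intro reweight_nonneg alpha_nonneg alpha_le_1) auto
  then show ?case
    unfolding x(1) Pk_Suc_upd[OF Suc.hyps x(2)]
    using Suc x(2) by (intro divide_nonneg_nonneg mult_nonneg_nonneg) auto
qed

lemma Pk_Suc_upd_le:
  assumes "a \<le> j" "j < n" "x \<in> Qk S j"
  shows "Pr (Suc j) (x(Suc j := y)) \<le> Pr j x / ((1 - \<delta> (Suc j)) * real (card (S (Suc j))))"
proof -
  have "reweight (alpha S A Fs (Suc j) x) (\<delta> (Suc j)) b \<le> 1 / (1 - \<delta> (Suc j))" for b
    using assms delta_bounds[of "Suc j"] by (intro reweight_le alpha_nonneg alpha_le_1) auto
  moreover have "0 \<le> Pr j x / real (card (S (Suc j)))"
    using assms Pk_nonneg by simp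
  ultimately have "Pr (Suc j) (x(Suc j := y)) \<le> 1 / (1 - \<delta> (Suc j)) * (Pr j x / real (card (S (Suc j))))"
    unfolding Pk_Suc_upd[OF assms(1,3)] times_divide_eq_right[symmetric] by (rule mult_right_mono)
  then show ?thesis
    by simp
qed

lemma sum_Pk_Suc_upd_le:
  assumes "a \<le> j" "j < n" "x \<in> Qk S j"
  shows "(\<Sum>y\<in>S (Suc j). Pr (Suc j) (x(Suc j := y))) \<le> Pr j x"
proof -
  let ?c = "real (card (S (Suc j)))"
  have c: "0 < ?c"
    using assms finite_S S_nonempty by (simp add: card_gt_0_iff)
  have "(\<Sum>y\<in>S (Suc j). Pr (Suc j) (x(Suc j := y)))
      = (\<Sum>y\<in>S (Suc j). reweight (alpha S A Fs (Suc j) x) (\<delta> (Suc j)) (x(Suc j := y) \<in> Bk S A Fs (Suc j)))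
        * (Pr j x / ?c)"
    using assms by (simp add: Pk_Suc_upd sum_distrib_right sum_divide_distrib)
  also have "\<dots> \<le> ?c * (Pr j x / ?c)"
    using assms delta_bounds[of "Suc j"] finite_S[of "Suc j"] S_nonempty[of "Suc j"] Pk_nonneg[of j x]
    by (intro mult_right_mono) (auto simp: alpha_def intro!: sum_reweight_le_card)
  also have "\<dots> = Pr j x"
    using c by simp
  finally show ?thesis .
qed

lemma cI_ge:
  assumes "I \<subseteq> {1..a}"
  shows "(\<Sum>x\<in>{x \<in> Qk S a. \<forall>i\<in>I. x i = v i}. P x) \<le> cI S a P I"
proof -
  have S_I: "finite (S i)" "S i \<noteq> {}" if "i \<in> I" for i
    using that assms a_le finite_S S_nonempty by auto
  define u where "u i = (if i \<in> I then if v i \<in> S i then v i else (SOME s. s \<in> S i) else undefined)" for i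
  have u: "u \<in> PiE I S"
    using S_I by (auto simp: u_def some_in_eq)
  have "{x \<in> Qk S a. \<forall>i\<in>I. x i = v i} \<subseteq> {x \<in> Qk S a. \<forall>i\<in>I. x i = u i}"
    using assms Qk_mem[of _ S a] by (fastforce simp: u_def)
  then have "(\<Sum>x\<in>{x \<in> Qk S a. \<forall>i\<in>I. x i = v i}. P x) \<le> (\<Sum>x\<in>{x \<in> Qk S a. \<forall>i\<in>I. x i = u i}. P x)"
    using P_nonneg Qk_finite[OF a_le] by (intro sum_mono2) auto
  also have "\<dots> \<le> cI S a P I"
    unfolding cI_def
  proof (rule Max_ge)
    show "finite ((\<lambda>v. \<Sum>x\<in>{x \<in> Qk S a. \<forall>i\<in>I. x i = v i}. P x) ` PiE I S)"
      using assms S_I by (intro finite_imageI finite_PiE) (auto intro: finite_subset)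
  qed (use u in blast)
  finally show ?thesis .
qed

lemma cI_nonneg: "I \<subseteq> {1..a} \<Longrightarrow> 0 \<le> cI S a P I"
  using P_nonneg by (intro order_trans[OF _ cI_ge] sum_nonneg) auto

lemma cI_empty: "cI S a P {} = 1"
  by (simp add: cI_def P_sum)

lemma hyp_weight_nonneg: "j \<le> n \<Longrightarrow> G \<subseteq> {1..j} \<Longrightarrow> 0 \<le> w G"
  unfolding hyp_weight_def
  using delta_card_pos by (intro mult_nonneg_nonneg prod_nonneg cI_nonneg) (force simp: less_imp_le)+

lemma hyp_weight_empty: "w {} = 1"
  by (simp add: hyp_weight_def cI_empty)

definition hyp_mass :: "nat \<Rightarrow> nat set \<Rightarrow> (nat \<Rightarrow> 'a) \<Rightarrow> real" where
  "hyp_mass j G v = (\<Sum>x\<in>Qk S j. Pr j x * of_bool (\<forall>i\<in>G. x i = v i))"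

lemma hyp_mass_Suc_notin:
  assumes "a \<le> j" "j < n" "Suc j \<notin> G"
  shows "hyp_mass (Suc j) G v \<le> hyp_mass j G v"
proof -
  have ind: "(\<forall>i\<in>G. (x(Suc j := y)) i = v i) \<longleftrightarrow> (\<forall>i\<in>G. x i = v i)" for x y
    using assms(3) by auto
  have "hyp_mass (Suc j) G v
      = (\<Sum>x\<in>Qk S j. of_bool (\<forall>i\<in>G. x i = v i) * (\<Sum>y\<in>S (Suc j). Pr (Suc j) (x(Suc j := y))))"
    unfolding hyp_mass_def sum_Qk_Suc ind by (simp add: sum_distrib_left mult.commute)
  also have "\<dots> \<le> (\<Sum>x\<in>Qk S j. of_bool (\<forall>i\<in>G. x i = v i) * Pr j x)"
    using assms by (intro sum_mono mult_left_mono sum_Pk_Suc_upd_le) auto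
  also have "\<dots> = hyp_mass j G v"
    by (simp add: hyp_mass_def mult.commute)
  finally show ?thesis .
qed

lemma hyp_mass_Suc_insert:
  assumes "a \<le> j" "j < n" "Suc j \<notin> G"
  shows "hyp_mass (Suc j) (insert (Suc j) G) v
    \<le> hyp_mass j G v / ((1 - \<delta> (Suc j)) * real (card (S (Suc j))))"
proof -
  let ?D = "(1 - \<delta> (Suc j)) * real (card (S (Suc j)))"
  have ind: "of_bool (\<forall>i\<in>insert (Suc j) G. (x(Suc j := y)) i = v i)
      = (of_bool (y = v (Suc j)) * of_bool (\<forall>i\<in>G. x i = v i) :: real)" for x y
    using assms(3) by auto
  have "hyp_mass (Suc j) (insert (Suc j) G) v
      = (\<Sum>x\<in>Qk S j. of_bool (\<forall>i\<in>G. x i = v i)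
          * (\<Sum>y\<in>S (Suc j). of_bool (y = v (Suc j)) * Pr (Suc j) (x(Suc j := y))))"
    unfolding hyp_mass_def sum_Qk_Suc ind by (simp add: sum_distrib_left mult_ac)
  also have "\<dots> \<le> (\<Sum>x\<in>Qk S j. of_bool (\<forall>i\<in>G. x i = v i) * (Pr j x / ?D))"
  proof (intro sum_mono mult_left_mono)
    fix x assume x: "x \<in> Qk S j"
    have D: "0 \<le> Pr j x / ?D"
      using assms x Pk_nonneg delta_card_pos[of "Suc j"] by simp
    have "(\<Sum>y\<in>S (Suc j). of_bool (y = v (Suc j)) * Pr (Suc j) (x(Suc j := y)))
        \<le> (\<Sum>y\<in>S (Suc j). of_bool (y = v (Suc j)) * (Pr j x / ?D))"
      using assms x by (intro sum_mono mult_left_mono Pk_Suc_upd_le) auto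
    also have "\<dots> = (\<Sum>y\<in>S (Suc j). if y = v (Suc j) then Pr j x / ?D else 0)"
      by (intro sum.cong) auto
    also have "\<dots> \<le> Pr j x / ?D"
      using D finite_S[of "Suc j"] assms by (simp add: sum.delta)
    finally show "(\<Sum>y\<in>S (Suc j). of_bool (y = v (Suc j)) * Pr (Suc j) (x(Suc j := y))) \<le> Pr j x / ?D" .
  qed auto
  also have "\<dots> = hyp_mass j G v / ?D"
    by (simp add: hyp_mass_def sum_divide_distrib mult_ac)
  finally show ?thesis .
qed

lemma hyp_mass_le: "a \<le> j \<Longrightarrow> j \<le> n \<Longrightarrow> G \<subseteq> {1..j} \<Longrightarrow> hyp_mass j G v \<le> w G"
proof (induction j arbitrary: G rule: nat_induct_at_least)
  case base
  have "hyp_mass a G v = (\<Sum>x\<in>{x \<in> Qk S a. \<forall>i\<in>G. x i = v i}. P x)"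
    using Qk_finite[OF a_le] by (simp add: hyp_mass_def Pk_base Collect_conj_eq Int_commute)
  also have "\<dots> \<le> w G"
    using base cI_ge by (simp add: hyp_weight_low)
  finally show ?case .
next
  case (Suc j)
  show ?case
  proof (cases "Suc j \<in> G")
    case True
    then obtain G' where G: "G = insert (Suc j) G'" "Suc j \<notin> G'"
      by (meson Set.set_insert)
    with Suc.prems have G': "G' \<subseteq> {1..j}"
      by (force simp: le_Suc_eq)
    let ?D = "(1 - \<delta> (Suc j)) * real (card (S (Suc j)))"
    have "hyp_mass (Suc j) G v \<le> hyp_mass j G' v / ?D"
      unfolding G(1) using Suc G(2) by (intro hyp_mass_Suc_insert) auto
    also have "\<dots> \<le> w G' / ?D"
      using Suc G' delta_card_pos[of "Suc j"] by (intro divide_right_mono) auto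
    also have "\<dots> = w G"
      using Suc.hyps G G' by (simp add: hyp_weight_insert finite_subset)
    finally show ?thesis .
  next
    case False
    with Suc.prems have G: "G \<subseteq> {1..j}"
      by (force simp: le_Suc_eq)
    have "hyp_mass (Suc j) G v \<le> hyp_mass j G v"
      using Suc False by (intro hyp_mass_Suc_notin) auto
    also have "\<dots> \<le> w G"
      using Suc G by auto
    finally show ?thesis .
  qed
qed

lemma sum_hyp_weight_Pow:
  assumes "a \<le> j"
  shows "(\<Sum>G\<in>Pow {1..j}. w G) = ck S a P \<delta> j 1"
  using sum_Pow_hyp_weight[OF assms, of 1] by simp

lemma sum_sum_hyp_weight_Pow:
  assumes "a \<le> j"
  shows "(\<Sum>G\<in>Pow {1..j}. \<Sum>G'\<in>Pow {1..j}. w (G \<union> G')) = ck S a P \<delta> j 3"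
  using sum_Pow_Pow_Un[of "{1..j}" w] sum_Pow_hyp_weight[OF assms, of 3] by simp

lemma M1_le_Nk_traces:
  assumes "a < k" "k \<le> n"
  shows "M1 S A Fs a P \<delta> k \<le> (\<Sum>G\<in>Nk_traces Fs k. w G) / real (card (S k))"
proof -
  let ?ind = "\<lambda>F x. of_bool (\<forall>i\<in>F - {k}. x i = A F i) :: real"
  let ?c = "real (card (S k))"
  let ?Q = "Qk S (k - 1)"
  have "M1 S A Fs a P \<delta> k \<le> (\<Sum>x\<in>?Q. Pr (k - 1) x * ((\<Sum>F\<in>Nk Fs k. ?ind F x) / ?c))"
    unfolding M1_def using assms
    by (intro sum_mono mult_left_mono alpha_le_card_Nk Pk_nonneg) auto
  also have "\<dots> = (\<Sum>x\<in>?Q. \<Sum>F\<in>Nk Fs k. Pr (k - 1) x * ?ind F x) / ?c"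
    by (simp add: sum_distrib_left sum_divide_distrib)
  also have "\<dots> = (\<Sum>F\<in>Nk Fs k. hyp_mass (k - 1) (F - {k}) (A F)) / ?c"
    unfolding hyp_mass_def by (subst sum.swap) (rule refl)
  also have "\<dots> \<le> (\<Sum>F\<in>Nk Fs k. w (F - {k})) / ?c"
    using assms Nk_memD by (intro divide_right_mono sum_mono hyp_mass_le) auto
  also have "\<dots> = (\<Sum>G\<in>Nk_traces Fs k. w G) / ?c"
    by (simp add: Nk_traces_def sum.reindex[OF inj_on_Nk_trace])
  finally show ?thesis .
qed

lemma M2_le_Nk_traces:
  assumes "a < k" "k \<le> n"
  shows "M2 S A Fs a P \<delta> k
    \<le> (\<Sum>G\<in>Nk_traces Fs k. \<Sum>G'\<in>Nk_traces Fs k. w (G \<union> G')) / real (card (S k))^2"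
proof -
  let ?ind = "\<lambda>F x. of_bool (\<forall>i\<in>F - {k}. x i = A F i) :: real"
  let ?c = "real (card (S k))"
  let ?Q = "Qk S (k - 1)"
  let ?v = "\<lambda>F F'. override_on (A F') (A F) (F - {k})"
  \<comment> \<open>a common point of two hyperplanes lies in the one fixing the union of their coordinates\<close>
  have ind_mult: "?ind F x * ?ind F' x \<le> of_bool (\<forall>i\<in>(F - {k}) \<union> (F' - {k}). x i = ?v F F' i)"
    for F F' x by (auto simp: override_on_def)
  have "M2 S A Fs a P \<delta> k \<le> (\<Sum>x\<in>?Q. Pr (k - 1) x * ((\<Sum>F\<in>Nk Fs k. ?ind F x) / ?c)^2)"
    unfolding M2_def using assms
    by (intro sum_mono mult_left_mono power_mono alpha_le_card_Nk Pk_nonneg alpha_nonneg) auto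
  also have "\<dots> = (\<Sum>x\<in>?Q. \<Sum>F\<in>Nk Fs k. \<Sum>F'\<in>Nk Fs k. Pr (k - 1) x * (?ind F x * ?ind F' x)) / ?c^2"
  proof -
    have "((\<Sum>F\<in>Nk Fs k. ?ind F x) / ?c)^2 = (\<Sum>F\<in>Nk Fs k. \<Sum>F'\<in>Nk Fs k. ?ind F x * ?ind F' x) / ?c^2"
      for x by (simp add: power_divide power2_eq_square sum_product)
    then show ?thesis
      by (simp only: sum_distrib_left sum_divide_distrib times_divide_eq_right)
  qed
  also have "\<dots> = (\<Sum>F\<in>Nk Fs k. \<Sum>F'\<in>Nk Fs k. \<Sum>x\<in>?Q. Pr (k - 1) x * (?ind F x * ?ind F' x)) / ?c^2"
    by (subst sum.swap, subst sum.swap) (rule refl)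
  also have "\<dots> \<le> (\<Sum>F\<in>Nk Fs k. \<Sum>F'\<in>Nk Fs k. hyp_mass (k - 1) ((F - {k}) \<union> (F' - {k})) (?v F F')) / ?c^2"
    unfolding hyp_mass_def using assms ind_mult
    by (intro divide_right_mono sum_mono mult_left_mono Pk_nonneg) auto
  also have "\<dots> \<le> (\<Sum>F\<in>Nk Fs k. \<Sum>F'\<in>Nk Fs k. w ((F - {k}) \<union> (F' - {k}))) / ?c^2"
    using assms Nk_memD by (intro divide_right_mono sum_mono hyp_mass_le) auto
  also have "\<dots> = (\<Sum>G\<in>Nk_traces Fs k. \<Sum>G'\<in>Nk_traces Fs k. w (G \<union> G')) / ?c^2"
    by (simp add: Nk_traces_def sum.reindex[OF inj_on_Nk_trace])
  finally show ?thesis .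
qed

lemma M1_le:
  assumes "a < k" "k \<le> n"
  shows "M1 S A Fs a P \<delta> k \<le> ck S a P \<delta> (k - 1) 1 / real (card (S k))"
proof -
  have "(\<Sum>G\<in>Nk_traces Fs k. w G) \<le> (\<Sum>G\<in>Pow {1..k - 1}. w G)"
    using assms Nk_traces_subset hyp_weight_nonneg[of "k - 1"] by (intro sum_mono2) auto
  also have "\<dots> = ck S a P \<delta> (k - 1) 1"
    using assms by (intro sum_hyp_weight_Pow) simp
  finally show ?thesis
    using M1_le_Nk_traces[OF assms] by (simp add: divide_right_mono order_trans)
qed

lemma M2_le:
  assumes "a < k" "k \<le> n"
  shows "M2 S A Fs a P \<delta> k \<le> ck S a P \<delta> (k - 1) 3 / real (card (S k))^2"
proof -
  have "(\<Sum>G\<in>Nk_traces Fs k. \<Sum>G'\<in>Nk_traces Fs k. w (G \<union> G'))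
      \<le> (\<Sum>G\<in>Pow {1..k - 1}. \<Sum>G'\<in>Pow {1..k - 1}. w (G \<union> G'))"
    using assms Nk_traces_subset hyp_weight_nonneg[of "k - 1"] by (intro sum_sum_mono_subset) auto
  also have "\<dots> = ck S a P \<delta> (k - 1) 3"
    using assms by (intro sum_sum_hyp_weight_Pow) simp
  finally show ?thesis
    using M2_le_Nk_traces[OF assms] by (simp add: divide_right_mono order_trans)
qed

lemma M2_le_no_singleton:
  assumes "a < k" "k \<le> n" "\<forall>F\<in>Nk Fs k. card F \<noteq> 1"
  shows "M2 S A Fs a P \<delta> k
    \<le> (ck S a P \<delta> (k - 1) 3 - 2 * ck S a P \<delta> (k - 1) 1 + 1) / real (card (S k))^2"
proof -
  let ?T = "Pow {1..k - 1}"
  have "(\<Sum>G\<in>Nk_traces Fs k. \<Sum>G'\<in>Nk_traces Fs k. w (G \<union> G'))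
      \<le> (\<Sum>G\<in>?T - {{}}. \<Sum>G'\<in>?T - {{}}. w (G \<union> G'))"
  proof (rule sum_sum_mono_subset)
    show "Nk_traces Fs k \<subseteq> ?T - {{}}"
      using Nk_traces_subset empty_notin_Nk_traces[OF assms(3)] by blast
  qed (use assms hyp_weight_nonneg[of "k - 1"] in auto)
  also have "\<dots> = (\<Sum>G\<in>?T. \<Sum>G'\<in>?T. w (G \<union> G')) - 2 * (\<Sum>G\<in>?T. w G) + w {}"
    by (intro sum_sum_Un_remove_empty) auto
  also have "\<dots> = ck S a P \<delta> (k - 1) 3 - 2 * ck S a P \<delta> (k - 1) 1 + 1"
    using assms sum_hyp_weight_Pow[of "k - 1"] sum_sum_hyp_weight_Pow[of "k - 1"]
    by (simp add: hyp_weight_empty)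
  finally show ?thesis
    using M2_le_Nk_traces[OF assms(1,2)] by (simp add: divide_right_mono order_trans)
qed

end

theorem theorem3p2:
  fixes S :: "nat \<Rightarrow> 'a set" and A :: "nat set \<Rightarrow> nat \<Rightarrow> 'a" and Fs :: "nat set set"
    and n a k :: nat and P :: "(nat \<Rightarrow> 'a) \<Rightarrow> real" and \<delta> :: "nat \<Rightarrow> real"
  assumes S_fin: "\<forall>i\<in>{1..n}. finite (S i) \<and> card (S i) \<ge> 2"
    and hyps: "\<forall>F\<in>Fs. F \<noteq> {} \<and> F \<subseteq> {1..n} \<and> (\<forall>i\<in>F. A F i \<in> S i)"
    and a_le: "a \<le> n"
    and P_nonneg: "\<forall>x\<in>Qk S a. P x \<ge> 0"
    and P_sum: "(\<Sum>x\<in>Qk S a. P x) = 1"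
    and delta: "\<forall>j\<in>{a+1..n}. 0 \<le> \<delta> j \<and> \<delta> j \<le> 1/2"
    and k: "a < k" "k \<le> n"
  shows "M1 S A Fs a P \<delta> k \<le> ck S a P \<delta> (k - 1) 1 / real (card (S k))
       \<and> M2 S A Fs a P \<delta> k \<le> ck S a P \<delta> (k - 1) 3 / real (card (S k))^2
       \<and> ((\<forall>j\<in>{1..n}. card (S j) \<ge> 3) \<and> (\<forall>F\<in>Nk Fs k. card F \<noteq> 1) \<longrightarrow>
           M2 S A Fs a P \<delta> k \<le> (ck S a P \<delta> (k - 1) 3 - 2 * ck S a P \<delta> (k - 1) 1 + 1)
                                  / real (card (S k))^2)"
proof -
  interpret reweighting S A Fs n a P \<delta>
    using S_fin a_le P_nonneg P_sum delta by unfold_locales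
  show ?thesis
    using M1_le[OF k] M2_le[OF k] M2_le_no_singleton[OF k] by blast
qed

end
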